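(* Let $L\subseteq Q$ be a dense extension of symmetric Leibniz algebras, with $L$ semiprime and $\mathrm{ran}(Q)=\mathrm{lan}(Q)=\{0\}$. If $\mathscr{A}(Q)$ is strong right ideally absorbed into $\mathscr{A}_0$, then $\mathscr{A}(Q)$ is a left quotient algebra of $\mathscr{A}_0$.
   Context: A symmetric Leibniz algebra satisfies both $[x,[y,z]]=[[x,y],z]-[[x,z],y]$ and $[x,[y,z]]=[[x,y],z]+[y,[x,z]]$. $L$ semiprime: $[I,I]\ne\{0\}$ for each nonzero ideal $I$ of $L$. $\mathrm{lan}(Q)=\{x:[x,Q]=0\}$, $\mathrm{ran}(Q)=\{x:[Q,x]=0\}$. For $x\in Q$, $R_x(u)=[u,x]$, $L_x(u)=[x,u]$; $M(Q)$ is the associative subalgebra of $\mathrm{End}(Q)$ generated by the identity and all $R_x,L_x$; $L$ is dense in $Q$ if the only $\mu\in M(Q)$ with $\mu(L)=\{0\}$ is $0$. $\mathscr{A}(Q)$ is the associative subalgebra generated by all $R_x,L_x$, $\mathscr{A}_0=\{\mu\in\mathscr{A}(Q):\mu(L)\subseteq L\}$. An associative algebra $S$ is strong right ideally absorbed into a subalgebra $A$ if for any $p,q\in S\setminus\{0\}$ there is a two-sided ideal $I$ of $A$ with $\{a\in A:aI=0\}=\{0\}$ such that $pI\ne\{0\}$ or $qI\ne\{0\}$, and $pI,qI\subseteq A$. $S$ is a left quotient algebra of $A$ if for all $p,q\in S$ with $p\ne0$ there is $x\in A$ with $xp\ne0$ and $xq\in A$. *)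

theory Defs
  imports Complex_Main
begin

text \<open>An algebra over a field 'k is modelled on a type 'v with scalar multiplication sc
  and bilinear bracket br.  The ambient algebra Q is the whole type 'v.\<close>

definition bilinear_bracket :: "('k::field \<Rightarrow> 'v::ab_group_add \<Rightarrow> 'v) \<Rightarrow> ('v \<Rightarrow> 'v \<Rightarrow> 'v) \<Rightarrow> bool" where
  "bilinear_bracket sc br \<longleftrightarrow>
     (\<forall>x y z. br (x + y) z = br x z + br y z) \<and>
     (\<forall>x y z. br x (y + z) = br x y + br x z) \<and>
     (\<forall>c x y. br (sc c x) y = sc c (br x y)) \<and>
     (\<forall>c x y. br x (sc c y) = sc c (br x y))"

definition symmetric_leibniz :: "('k::field \<Rightarrow> 'v::ab_group_add \<Rightarrow> 'v) \<Rightarrow> ('v \<Rightarrow> 'v \<Rightarrow> 'v) \<Rightarrow> bool" where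
  "symmetric_leibniz sc br \<longleftrightarrow>
     vector_space sc \<and> bilinear_bracket sc br \<and>
     (\<forall>x y z. br x (br y z) = br (br x y) z - br (br x z) y) \<and>
     (\<forall>x y z. br x (br y z) = br (br x y) z + br y (br x z))"

definition subalgebra :: "('k::field \<Rightarrow> 'v::ab_group_add \<Rightarrow> 'v) \<Rightarrow> ('v \<Rightarrow> 'v \<Rightarrow> 'v) \<Rightarrow> 'v set \<Rightarrow> bool" where
  "subalgebra sc br L \<longleftrightarrow> 0 \<in> L \<and> (\<forall>x\<in>L. \<forall>y\<in>L. x + y \<in> L) \<and>
     (\<forall>c. \<forall>x\<in>L. sc c x \<in> L) \<and> (\<forall>x\<in>L. \<forall>y\<in>L. br x y \<in> L)"

definition lie_ideal :: "('k::field \<Rightarrow> 'v::ab_group_add \<Rightarrow> 'v) \<Rightarrow> ('v \<Rightarrow> 'v \<Rightarrow> 'v) \<Rightarrow> 'v set \<Rightarrow> 'v set \<Rightarrow> bool" where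
  "lie_ideal sc br L I \<longleftrightarrow> I \<subseteq> L \<and> 0 \<in> I \<and> (\<forall>x\<in>I. \<forall>y\<in>I. x + y \<in> I) \<and>
     (\<forall>c. \<forall>x\<in>I. sc c x \<in> I) \<and> (\<forall>x\<in>L. \<forall>y\<in>I. br x y \<in> I \<and> br y x \<in> I)"

text \<open>[I,I] is the span of all brackets of elements of I; it is nonzero iff some bracket is nonzero.\<close>
definition semiprime :: "('k::field \<Rightarrow> 'v::ab_group_add \<Rightarrow> 'v) \<Rightarrow> ('v \<Rightarrow> 'v \<Rightarrow> 'v) \<Rightarrow> 'v set \<Rightarrow> bool" where
  "semiprime sc br L \<longleftrightarrow> (\<forall>I. lie_ideal sc br L I \<and> I \<noteq> {0} \<longrightarrow> (\<exists>x\<in>I. \<exists>y\<in>I. br x y \<noteq> 0))"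

definition lanQ :: "('v::ab_group_add \<Rightarrow> 'v \<Rightarrow> 'v) \<Rightarrow> 'v set" where
  "lanQ br = {x. \<forall>y. br x y = 0}"

definition ranQ :: "('v::ab_group_add \<Rightarrow> 'v \<Rightarrow> 'v) \<Rightarrow> 'v set" where
  "ranQ br = {x. \<forall>y. br y x = 0}"

definition Rop :: "('v \<Rightarrow> 'v \<Rightarrow> 'v) \<Rightarrow> 'v \<Rightarrow> 'v \<Rightarrow> 'v" where
  "Rop br x = (\<lambda>u. br u x)"

definition Lop :: "('v \<Rightarrow> 'v \<Rightarrow> 'v) \<Rightarrow> 'v \<Rightarrow> 'v \<Rightarrow> 'v" where
  "Lop br x = (\<lambda>u. br x u)"

inductive_set assoc_gen :: "('k::field \<Rightarrow> 'v::ab_group_add \<Rightarrow> 'v) \<Rightarrow> ('v \<Rightarrow> 'v) set \<Rightarrow> ('v \<Rightarrow> 'v) set"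
  for sc :: "'k::field \<Rightarrow> 'v::ab_group_add \<Rightarrow> 'v" and G :: "('v \<Rightarrow> 'v) set" where
  gen: "f \<in> G \<Longrightarrow> f \<in> assoc_gen sc G"
| zero: "(\<lambda>_. 0) \<in> assoc_gen sc G"
| add: "f \<in> assoc_gen sc G \<Longrightarrow> g \<in> assoc_gen sc G \<Longrightarrow> (\<lambda>v. f v + g v) \<in> assoc_gen sc G"
| smult: "f \<in> assoc_gen sc G \<Longrightarrow> (\<lambda>v. sc c (f v)) \<in> assoc_gen sc G"
| comp: "f \<in> assoc_gen sc G \<Longrightarrow> g \<in> assoc_gen sc G \<Longrightarrow> f \<circ> g \<in> assoc_gen sc G"

definition AQ :: "('k::field \<Rightarrow> 'v::ab_group_add \<Rightarrow> 'v) \<Rightarrow> ('v \<Rightarrow> 'v \<Rightarrow> 'v) \<Rightarrow> ('v \<Rightarrow> 'v) set" where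
  "AQ sc br = assoc_gen sc (range (Rop br) \<union> range (Lop br))"

definition MQ :: "('k::field \<Rightarrow> 'v::ab_group_add \<Rightarrow> 'v) \<Rightarrow> ('v \<Rightarrow> 'v \<Rightarrow> 'v) \<Rightarrow> ('v \<Rightarrow> 'v) set" where
  "MQ sc br = assoc_gen sc (insert id (range (Rop br) \<union> range (Lop br)))"

definition A0 :: "('k::field \<Rightarrow> 'v::ab_group_add \<Rightarrow> 'v) \<Rightarrow> ('v \<Rightarrow> 'v \<Rightarrow> 'v) \<Rightarrow> 'v set \<Rightarrow> ('v \<Rightarrow> 'v) set" where
  "A0 sc br L = {\<mu> \<in> AQ sc br. \<forall>x\<in>L. \<mu> x \<in> L}"

definition dense_in :: "('k::field \<Rightarrow> 'v::ab_group_add \<Rightarrow> 'v) \<Rightarrow> ('v \<Rightarrow> 'v \<Rightarrow> 'v) \<Rightarrow> 'v set \<Rightarrow> bool" where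
  "dense_in sc br L \<longleftrightarrow> (\<forall>\<mu>\<in>MQ sc br. (\<forall>x\<in>L. \<mu> x = 0) \<longrightarrow> \<mu> = (\<lambda>_. 0))"

definition assoc_ideal :: "('k::field \<Rightarrow> 'v::ab_group_add \<Rightarrow> 'v) \<Rightarrow> ('v \<Rightarrow> 'v) set \<Rightarrow> ('v \<Rightarrow> 'v) set \<Rightarrow> bool" where
  "assoc_ideal sc A I \<longleftrightarrow> I \<subseteq> A \<and> (\<lambda>_. 0) \<in> I \<and>
     (\<forall>f\<in>I. \<forall>g\<in>I. (\<lambda>v. f v + g v) \<in> I) \<and> (\<forall>c. \<forall>f\<in>I. (\<lambda>v. sc c (f v)) \<in> I) \<and>
     (\<forall>a\<in>A. \<forall>f\<in>I. a \<circ> f \<in> I \<and> f \<circ> a \<in> I)"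

definition strong_right_ideally_absorbed ::
  "('k::field \<Rightarrow> 'v::ab_group_add \<Rightarrow> 'v) \<Rightarrow> ('v \<Rightarrow> 'v) set \<Rightarrow> ('v \<Rightarrow> 'v) set \<Rightarrow> bool" where
  "strong_right_ideally_absorbed sc S A \<longleftrightarrow>
     (\<forall>p\<in>S - {\<lambda>_. 0}. \<forall>q\<in>S - {\<lambda>_. 0}. \<exists>I. assoc_ideal sc A I \<and>
        {a\<in>A. \<forall>i\<in>I. a \<circ> i = (\<lambda>_. 0)} = {\<lambda>_. 0} \<and>
        ((\<exists>i\<in>I. p \<circ> i \<noteq> (\<lambda>_. 0)) \<or> (\<exists>i\<in>I. q \<circ> i \<noteq> (\<lambda>_. 0))) \<and>
        (\<forall>i\<in>I. p \<circ> i \<in> A \<and> q \<circ> i \<in> A))"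

definition left_quotient_algebra :: "('v::ab_group_add \<Rightarrow> 'v) set \<Rightarrow> ('v \<Rightarrow> 'v) set \<Rightarrow> bool" where
  "left_quotient_algebra S A \<longleftrightarrow>
     (\<forall>p\<in>S. \<forall>q\<in>S. p \<noteq> (\<lambda>_. 0) \<longrightarrow> (\<exists>x\<in>A. x \<circ> p \<noteq> (\<lambda>_. 0) \<and> x \<circ> q \<in> A))"

end

theory Submission
  imports Defs
begin

text \<open>Since \<open>[x,[y,y]] = 0\<close> by the first defining identity, \<open>ran(Q) = 0\<close> makes the bracket
  anticommutative.  By the second (Leibniz) identity every \<open>q \<in> \<A>(Q)\<close> acts on brackets as a
  finite sum \<open>[q w, u] = \<Sum> c\<^sub>t \<alpha>\<^sub>t [w, \<beta>\<^sub>t u]\<close> with \<open>\<alpha>\<^sub>t, \<beta>\<^sub>t \<in> \<A>(Q) \<union> {id}\<close>.  Strong absorption gives,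
  for each of these finitely many factors, a left faithful ideal of \<open>\<A>\<^sub>0\<close> that it maps into
  \<open>\<A>\<^sub>0\<close>; from these one builds a left faithful set \<open>W \<subseteq> \<A>\<^sub>0\<close> of common denominators.  For
  \<open>u, w \<in> W\<close> and \<open>l \<in> L\<close> the map \<open>x = L\<^bsub>u(w l)\<^esub>\<close> then lies in \<open>\<A>\<^sub>0\<close> together with \<open>x q\<close>.  If all
  these \<open>x\<close> killed \<open>p\<close>, a nonzero value \<open>y = p v \<in> L\<close> (from absorption and density) would satisfy
  \<open>[y, u(w l)] = 0\<close> throughout; density and faithfulness of \<open>W\<close> then give \<open>L\<^sub>y = 0\<close>,
  contradicting \<open>lan(Q) = 0\<close>.\<close>

definition left_faithful :: "('a \<Rightarrow> 'a::zero) set \<Rightarrow> ('a \<Rightarrow> 'a) set \<Rightarrow> bool" where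
  "left_faithful A W \<longleftrightarrow> (\<forall>b\<in>A. (\<forall>w\<in>W. b \<circ> w = (\<lambda>_. 0)) \<longrightarrow> b = (\<lambda>_. 0))"

definition faithful_absorbing_ideal :: "('a \<Rightarrow> 'a::zero) set \<Rightarrow> ('a \<Rightarrow> 'a) \<Rightarrow> ('a \<Rightarrow> 'a) set \<Rightarrow> bool" where
  "faithful_absorbing_ideal A a I \<longleftrightarrow>
     left_faithful A I \<and> I \<subseteq> A \<and> (\<forall>y\<in>A. \<forall>i\<in>I. y \<circ> i \<in> I) \<and> (\<forall>i\<in>I. a \<circ> i \<in> A)"

definition denominator_ideal :: "('a \<Rightarrow> 'a) set \<Rightarrow> ('a \<Rightarrow> 'a) \<Rightarrow> ('a \<Rightarrow> 'a) set" where
  "denominator_ideal A a = {w \<in> A. \<forall>z \<in> insert id A. a \<circ> z \<circ> w \<in> A}"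

lemma denominator_idealD: "w \<in> denominator_ideal A a \<Longrightarrow> z \<in> insert id A \<Longrightarrow> a \<circ> z \<circ> w \<in> A"
  unfolding denominator_ideal_def by blast

lemma left_faithful_mono: "left_faithful A I \<Longrightarrow> I \<subseteq> W \<Longrightarrow> left_faithful A W"
  unfolding left_faithful_def by blast

lemma denominator_ideal_comp_right:
  assumes "\<And>f g. f \<in> A \<Longrightarrow> g \<in> A \<Longrightarrow> f \<circ> g \<in> A"
    and "w \<in> denominator_ideal A a" and "y \<in> A"
  shows "w \<circ> y \<in> denominator_ideal A a"
proof -
  have w: "w \<in> A" "\<And>z. z \<in> insert id A \<Longrightarrow> a \<circ> z \<circ> w \<in> A"
    using assms(2) unfolding denominator_ideal_def by auto
  have "a \<circ> z \<circ> (w \<circ> y) \<in> A" if "z \<in> insert id A" for z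
    using assms(1)[OF w(2)[OF that] assms(3)] by (simp add: o_assoc)
  then show ?thesis using assms(1)[OF w(1) assms(3)] unfolding denominator_ideal_def by blast
qed

lemma left_faithful_Int_denominator_ideal:
  assumes comp_closed: "\<And>f g. f \<in> A \<Longrightarrow> g \<in> A \<Longrightarrow> f \<circ> g \<in> A"
    and W: "left_faithful A W" "W \<subseteq> A" "\<And>w y. w \<in> W \<Longrightarrow> y \<in> A \<Longrightarrow> w \<circ> y \<in> W"
    and I: "faithful_absorbing_ideal A a I"
  shows "left_faithful A (W \<inter> denominator_ideal A a)"
  unfolding left_faithful_def
proof (intro ballI impI)
  fix b assume b: "b \<in> A" and kills: "\<forall>v\<in>W \<inter> denominator_ideal A a. b \<circ> v = (\<lambda>_. 0)"
  have I_sub: "I \<subseteq> A" and I_left: "\<And>y i. y \<in> A \<Longrightarrow> i \<in> I \<Longrightarrow> y \<circ> i \<in> I"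
    and I_abs: "\<And>i. i \<in> I \<Longrightarrow> a \<circ> i \<in> A"
    using I unfolding faithful_absorbing_ideal_def by auto
  have "b \<circ> w = (\<lambda>_. 0)" if w: "w \<in> W" for w
  proof -
    have "w \<circ> i \<in> W \<inter> denominator_ideal A a" if i: "i \<in> I" for i
    proof -
      have "a \<circ> z \<circ> (w \<circ> i) \<in> A" if "z \<in> insert id A" for z
      proof -
        have "z \<circ> w \<in> A" using that w \<open>W \<subseteq> A\<close> comp_closed by auto
        then have "a \<circ> ((z \<circ> w) \<circ> i) \<in> A" using I_abs I_left i by blast
        then show ?thesis by (simp add: comp_assoc)
      qed
      moreover have "w \<circ> i \<in> A" using w i \<open>W \<subseteq> A\<close> I_sub comp_closed by blast
      ultimately show ?thesis using W(3) w i I_sub unfolding denominator_ideal_def by blast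
    qed
    then have "\<forall>i\<in>I. (b \<circ> w) \<circ> i = (\<lambda>_. 0)" using kills by (simp add: comp_assoc)
    moreover have "b \<circ> w \<in> A" using b w \<open>W \<subseteq> A\<close> comp_closed by blast
    ultimately show ?thesis using I unfolding faithful_absorbing_ideal_def left_faithful_def by blast
  qed
  then show "b = (\<lambda>_. 0)" using W(1) b unfolding left_faithful_def by blast
qed

lemma left_faithful_INT_denominator_ideal:
  assumes comp_closed: "\<And>f g. f \<in> A \<Longrightarrow> g \<in> A \<Longrightarrow> f \<circ> g \<in> A"
    and "left_faithful A A" and "finite F"
    and "\<And>a. a \<in> F \<Longrightarrow> \<exists>I. faithful_absorbing_ideal A a I"
  shows "left_faithful A (A \<inter> (\<Inter>a\<in>F. denominator_ideal A a))"
  using \<open>finite F\<close> assms(4)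
proof (induction F rule: finite_induct)
  case empty
  then show ?case using \<open>left_faithful A A\<close> by simp
next
  case (insert a F)
  let ?W = "A \<inter> (\<Inter>a\<in>F. denominator_ideal A a)"
  obtain I where "faithful_absorbing_ideal A a I" using insert.prems by blast
  moreover have "w \<circ> y \<in> ?W" if "w \<in> ?W" "y \<in> A" for w y
    using that comp_closed[of w y] denominator_ideal_comp_right[OF comp_closed, of w _ y] by blast
  moreover have "left_faithful A ?W" using insert.IH insert.prems by blast
  ultimately have "left_faithful A (?W \<inter> denominator_ideal A a)"
    by (intro left_faithful_Int_denominator_ideal[OF comp_closed]) auto
  then show ?case by (simp add: Int_ac)
qed

lemma faithful_absorbing_idealI:
  assumes "assoc_ideal sc A I" and "left_faithful A I" and "\<forall>i\<in>I. a \<circ> i \<in> A"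
  shows "faithful_absorbing_ideal A a I"
proof -
  from assms(1) have "I \<subseteq> A" "\<forall>y\<in>A. \<forall>i\<in>I. y \<circ> i \<in> I" unfolding assoc_ideal_def by auto
  with assms(2,3) show ?thesis unfolding faithful_absorbing_ideal_def by blast
qed

lemma strong_right_ideally_absorbedE:
  assumes "strong_right_ideally_absorbed sc S A" and "p \<in> S" and "p \<noteq> (\<lambda>_. 0)"
  obtains I where "assoc_ideal sc A I" "left_faithful A I"
    and "\<exists>i\<in>I. p \<circ> i \<noteq> (\<lambda>_. 0)" and "\<forall>i\<in>I. p \<circ> i \<in> A"
proof -
  have p: "p \<in> S - {\<lambda>_. 0}" using assms(2,3) by blast
  have "\<exists>I. assoc_ideal sc A I \<and> {b \<in> A. \<forall>i\<in>I. b \<circ> i = (\<lambda>_. 0)} = {\<lambda>_. 0} \<and>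
      ((\<exists>i\<in>I. p \<circ> i \<noteq> (\<lambda>_. 0)) \<or> (\<exists>i\<in>I. p \<circ> i \<noteq> (\<lambda>_. 0))) \<and>
      (\<forall>i\<in>I. p \<circ> i \<in> A \<and> p \<circ> i \<in> A)"
    using bspec[OF bspec[OF assms(1)[unfolded strong_right_ideally_absorbed_def] p] p] .
  then obtain I where "assoc_ideal sc A I" "{b \<in> A. \<forall>i\<in>I. b \<circ> i = (\<lambda>_. 0)} = {\<lambda>_. 0}"
    "\<exists>i\<in>I. p \<circ> i \<noteq> (\<lambda>_. 0)" "\<forall>i\<in>I. p \<circ> i \<in> A"
    by auto
  moreover from this(2) have "left_faithful A I" unfolding left_faithful_def by blast
  ultimately show ?thesis using that by blast
qed

lemma assoc_gen_mono: "f \<in> assoc_gen sc G \<Longrightarrow> G \<subseteq> H \<Longrightarrow> f \<in> assoc_gen sc H"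
  by (induction rule: assoc_gen.induct) (auto intro: assoc_gen.intros)

definition expansion_factors :: "('k \<times> ('v \<Rightarrow> 'v) \<times> ('v \<Rightarrow> 'v)) list \<Rightarrow> ('v \<Rightarrow> 'v) set" where
  "expansion_factors xs = (\<lambda>(c, \<alpha>, \<beta>). \<alpha>) ` set xs \<union> (\<lambda>(c, \<alpha>, \<beta>). \<beta>) ` set xs"

lemma in_expansion_factors:
  "(c, \<alpha>, \<beta>) \<in> set xs \<Longrightarrow> \<alpha> \<in> expansion_factors xs \<and> \<beta> \<in> expansion_factors xs"
  unfolding expansion_factors_def by force

locale symmetric_leibniz_algebra =
  fixes sc :: "'k::field \<Rightarrow> 'v::ab_group_add \<Rightarrow> 'v" and br :: "'v \<Rightarrow> 'v \<Rightarrow> 'v"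
  assumes symmetric_leibniz: "symmetric_leibniz sc br"
begin

sublocale vector_space sc
  using symmetric_leibniz unfolding symmetric_leibniz_def by blast

lemma bracket_add_left: "br (x + y) z = br x z + br y z"
  and bracket_add_right: "br x (y + z) = br x y + br x z"
  and bracket_scale_left: "br (sc c x) y = sc c (br x y)"
  and bracket_scale_right: "br x (sc c y) = sc c (br x y)"
  using symmetric_leibniz unfolding symmetric_leibniz_def bilinear_bracket_def by blast+

lemma right_leibniz: "br x (br y z) = br (br x y) z - br (br x z) y"
  and left_leibniz: "br x (br y z) = br (br x y) z + br y (br x z)"
  using symmetric_leibniz unfolding symmetric_leibniz_def by blast+

lemma bracket_zero_left [simp]: "br 0 y = 0"
  using bracket_add_left[of 0 0 y] by simp

lemma module_hom_AQ: "f \<in> AQ sc br \<Longrightarrow> module_hom sc sc f"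
  unfolding AQ_def
proof (induction rule: assoc_gen.induct)
  case (gen f)
  then show ?case
    by (auto simp: module_hom_iff module_axioms Rop_def Lop_def
        bracket_add_left bracket_add_right bracket_scale_left bracket_scale_right)
qed (auto simp: module_hom_iff module_axioms scale_right_distrib)

lemma module_hom_sum_list:
  "module_hom sc sc f \<Longrightarrow> f (\<Sum>x\<leftarrow>xs. g x) = (\<Sum>x\<leftarrow>xs. f (g x))"
  by (induction xs) (simp_all add: module_hom.add module_hom.zero)

lemma scale_sum_list: "sc c (\<Sum>x\<leftarrow>xs. g x) = (\<Sum>x\<leftarrow>xs. sc c (g x))"
  by (induction xs) (simp_all add: scale_right_distrib)

lemma AQ_comp: "f \<in> AQ sc br \<Longrightarrow> g \<in> AQ sc br \<Longrightarrow> f \<circ> g \<in> AQ sc br"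
  unfolding AQ_def by (rule assoc_gen.comp)

lemma Lop_in_AQ: "Lop br y \<in> AQ sc br"
  unfolding AQ_def by (auto intro: assoc_gen.gen)

lemma module_hom_insert_id_AQ: "f \<in> insert id (AQ sc br) \<Longrightarrow> module_hom sc sc f"
  using module_hom_AQ by (auto simp: module_hom_iff module_axioms)

lemma comp_in_insert_id_AQ:
  "f \<in> insert id (AQ sc br) \<Longrightarrow> g \<in> insert id (AQ sc br) \<Longrightarrow> f \<circ> g \<in> insert id (AQ sc br)"
  using AQ_comp by auto

definition bracket_expansion :: "('v \<Rightarrow> 'v) \<Rightarrow> ('k \<times> ('v \<Rightarrow> 'v) \<times> ('v \<Rightarrow> 'v)) list \<Rightarrow> bool" where
  "bracket_expansion q xs \<longleftrightarrow>
     (\<forall>(c, \<alpha>, \<beta>) \<in> set xs. \<alpha> \<in> insert id (AQ sc br) \<and> \<beta> \<in> insert id (AQ sc br)) \<and>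
     (\<forall>w u. br (q w) u = (\<Sum>(c, \<alpha>, \<beta>)\<leftarrow>xs. sc c (\<alpha> (br w (\<beta> u)))))"

lemma bracket_expansion_Rop: "bracket_expansion (Rop br z) [(1, id, Lop br z), (-1, Lop br z, id)]"
proof -
  have "br (br w z) u = br w (br z u) - br z (br w u)" for w u
    using left_leibniz[of w z u] by (simp add: algebra_simps)
  then show ?thesis
    unfolding bracket_expansion_def using Lop_in_AQ by (simp add: Rop_def Lop_def)
qed

lemma bracket_expansion_Lop: "bracket_expansion (Lop br z) [(1, Lop br z, id), (-1, id, Lop br z)]"
proof -
  have "br (br z w) u = br z (br w u) - br w (br z u)" for w u
    using left_leibniz[of z w u] by (simp add: algebra_simps)
  then show ?thesis
    unfolding bracket_expansion_def using Lop_in_AQ by (simp add: Lop_def)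
qed

lemma bracket_expansion_add:
  "bracket_expansion f xs \<Longrightarrow> bracket_expansion g ys \<Longrightarrow> bracket_expansion (\<lambda>v. f v + g v) (xs @ ys)"
  unfolding bracket_expansion_def by (auto simp: bracket_add_left)

lemma bracket_expansion_scale:
  assumes "bracket_expansion f xs"
  shows "bracket_expansion (\<lambda>v. sc c (f v)) [(c * d, \<alpha>, \<beta>). (d, \<alpha>, \<beta>) \<leftarrow> xs]"
proof -
  have "br (sc c (f w)) u = (\<Sum>(d, \<alpha>, \<beta>)\<leftarrow>xs. sc c (sc d (\<alpha> (br w (\<beta> u)))))" for w u
    using assms unfolding bracket_expansion_def by (simp add: bracket_scale_left scale_sum_list split_def)
  then show ?thesis
    using assms unfolding bracket_expansion_def by (auto simp: o_def split_def)
qed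

lemma bracket_expansion_comp:
  assumes f: "bracket_expansion f xs" and g: "bracket_expansion g ys"
  shows "bracket_expansion (f \<circ> g)
    [(c * d, \<alpha> \<circ> \<gamma>, \<delta> \<circ> \<beta>). (c, \<alpha>, \<beta>) \<leftarrow> xs, (d, \<gamma>, \<delta>) \<leftarrow> ys]"
    (is "bracket_expansion _ ?zs")
proof -
  have "br ((f \<circ> g) w) u = (\<Sum>(e, \<phi>, \<psi>)\<leftarrow>?zs. sc e (\<phi> (br w (\<psi> u))))" for w u
  proof -
    have "br ((f \<circ> g) w) u = (\<Sum>(c, \<alpha>, \<beta>)\<leftarrow>xs. sc c (\<alpha> (br (g w) (\<beta> u))))"
      using f unfolding bracket_expansion_def by simp
    also have "\<dots> = (\<Sum>(c, \<alpha>, \<beta>)\<leftarrow>xs. \<Sum>(d, \<gamma>, \<delta>)\<leftarrow>ys. sc (c * d) ((\<alpha> \<circ> \<gamma>) (br w ((\<delta> \<circ> \<beta>) u))))"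
    proof (intro arg_cong[where f = sum_list] map_cong refl, clarify)
      fix c \<alpha> \<beta> assume "(c, \<alpha>, \<beta>) \<in> set xs"
      then have \<alpha>: "module_hom sc sc \<alpha>"
        using f module_hom_insert_id_AQ unfolding bracket_expansion_def by auto
      have "br (g w) (\<beta> u) = (\<Sum>(d, \<gamma>, \<delta>)\<leftarrow>ys. sc d (\<gamma> (br w (\<delta> (\<beta> u)))))"
        using g unfolding bracket_expansion_def by simp
      then show "sc c (\<alpha> (br (g w) (\<beta> u))) =
          (\<Sum>(d, \<gamma>, \<delta>)\<leftarrow>ys. sc (c * d) ((\<alpha> \<circ> \<gamma>) (br w ((\<delta> \<circ> \<beta>) u))))"
        by (simp add: module_hom_sum_list[OF \<alpha>] scale_sum_list module_hom.scale[OF \<alpha>] split_def)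
    qed
    also have "\<dots> = (\<Sum>(e, \<phi>, \<psi>)\<leftarrow>?zs. sc e (\<phi> (br w (\<psi> u))))"
      by (induction xs) (simp_all add: split_def o_def)
    finally show ?thesis .
  qed
  moreover have "\<forall>(e, \<phi>, \<psi>) \<in> set ?zs. \<phi> \<in> insert id (AQ sc br) \<and> \<psi> \<in> insert id (AQ sc br)"
  proof (clarify)
    fix e \<phi> \<psi> assume "(e, \<phi>, \<psi>) \<in> set ?zs"
    then have "\<exists>c \<alpha> \<beta> d \<gamma> \<delta>. (c, \<alpha>, \<beta>) \<in> set xs \<and> (d, \<gamma>, \<delta>) \<in> set ys \<and> \<phi> = \<alpha> \<circ> \<gamma> \<and> \<psi> = \<delta> \<circ> \<beta>"
      by (clarsimp simp: comp_def) metis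
    then obtain c \<alpha> \<beta> d \<gamma> \<delta> where "(c, \<alpha>, \<beta>) \<in> set xs" "(d, \<gamma>, \<delta>) \<in> set ys" "\<phi> = \<alpha> \<circ> \<gamma>" "\<psi> = \<delta> \<circ> \<beta>"
      by blast
    then show "\<phi> \<in> insert id (AQ sc br) \<and> \<psi> \<in> insert id (AQ sc br)"
      using f g comp_in_insert_id_AQ unfolding bracket_expansion_def by (metis (no_types, lifting) case_prodD)
  qed
  ultimately show ?thesis
    unfolding bracket_expansion_def by simp
qed

lemma AQ_bracket_expansion: "q \<in> AQ sc br \<Longrightarrow> \<exists>xs. bracket_expansion q xs"
  unfolding AQ_def
proof (induction rule: assoc_gen.induct)
  case (gen f)
  then show ?case using bracket_expansion_Rop bracket_expansion_Lop by blast
next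
  case zero
  have "bracket_expansion (\<lambda>_. 0) []" unfolding bracket_expansion_def by simp
  then show ?case ..
next
  case (add f g)
  then obtain xs ys where "bracket_expansion f xs" "bracket_expansion g ys" by blast
  then show ?case by (blast intro: bracket_expansion_add)
next
  case (smult f c)
  then obtain xs where "bracket_expansion f xs" by blast
  then show ?case by (blast intro: bracket_expansion_scale)
next
  case (comp f g)
  then obtain xs ys where "bracket_expansion f xs" "bracket_expansion g ys" by blast
  then show ?case by (blast intro: bracket_expansion_comp)
qed

lemma expansion_factors_subset:
  "bracket_expansion q xs \<Longrightarrow> expansion_factors xs \<subseteq> insert id (AQ sc br)"
  unfolding bracket_expansion_def expansion_factors_def by auto

end

locale dense_extension = symmetric_leibniz_algebra sc br
  for sc :: "'k::field \<Rightarrow> 'v::ab_group_add \<Rightarrow> 'v" and br :: "'v \<Rightarrow> 'v \<Rightarrow> 'v" +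
  fixes L :: "'v set"
  assumes subalgebra: "subalgebra sc br L" and dense: "dense_in sc br L"
    and ran_trivial: "ranQ br = {0}" and lan_trivial: "lanQ br = {0}"
begin

lemma bracket_self: "br y y = 0"
proof -
  have "br x (br y y) = 0" for x
    using right_leibniz[of x y y] by simp
  then have "br y y \<in> ranQ br" unfolding ranQ_def by simp
  then show ?thesis using ran_trivial by simp
qed

lemma bracket_antisym: "br x y = - br y x"
proof -
  have "br x x + br x y + (br y x + br y y) = 0"
    using bracket_self[of "x + y"] by (simp add: bracket_add_left bracket_add_right add_ac)
  then show ?thesis by (simp add: bracket_self eq_neg_iff_add_eq_0)
qed

lemma subspace_L: "subspace L"
  using subalgebra unfolding subalgebra_def subspace_def by blast

lemma bracket_in_L: "x \<in> L \<Longrightarrow> y \<in> L \<Longrightarrow> br x y \<in> L"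
  using subalgebra unfolding subalgebra_def by blast

lemma sum_list_in_L: "(\<And>t. t \<in> set xs \<Longrightarrow> h t \<in> L) \<Longrightarrow> (\<Sum>t\<leftarrow>xs. h t) \<in> L"
  by (induction xs) (simp_all add: subspace_0 subspace_add subspace_L)

lemma A0_subset_AQ: "A0 sc br L \<subseteq> AQ sc br"
  unfolding A0_def by blast

lemma A0_apply: "f \<in> A0 sc br L \<Longrightarrow> x \<in> L \<Longrightarrow> f x \<in> L"
  unfolding A0_def by blast

lemma A0_comp: "f \<in> A0 sc br L \<Longrightarrow> g \<in> A0 sc br L \<Longrightarrow> f \<circ> g \<in> A0 sc br L"
  unfolding A0_def using AQ_comp by auto

lemma zero_in_A0: "(\<lambda>_. 0) \<in> A0 sc br L"
  unfolding A0_def AQ_def using subspace_0[OF subspace_L] by (auto intro: assoc_gen.zero)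

lemma Lop_in_A0: "y \<in> L \<Longrightarrow> Lop br y \<in> A0 sc br L"
  unfolding A0_def using Lop_in_AQ bracket_in_L by (auto simp: Lop_def)

lemma AQ_eq_zero_if_vanishes_on_L:
  assumes "f \<in> AQ sc br" and "\<And>x. x \<in> L \<Longrightarrow> f x = 0"
  shows "f = (\<lambda>_. 0)"
proof -
  have "f \<in> MQ sc br"
    using assms(1) unfolding AQ_def MQ_def by (rule assoc_gen_mono) auto
  then show ?thesis using dense assms(2) unfolding dense_in_def by blast
qed

lemma insert_id_AQ_faithful_absorbing_ideal:
  assumes absorbed: "strong_right_ideally_absorbed sc (AQ sc br) (A0 sc br L)"
    and A0_faithful: "left_faithful (A0 sc br L) (A0 sc br L)"
    and a: "a \<in> insert id (AQ sc br)"
  shows "\<exists>I. faithful_absorbing_ideal (A0 sc br L) a I"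
proof (cases "a = id \<or> a = (\<lambda>_. 0)")
  case True
  then have "\<forall>i\<in>A0 sc br L. a \<circ> i \<in> A0 sc br L"
    using zero_in_A0 by (auto simp: comp_def)
  then have "faithful_absorbing_ideal (A0 sc br L) a (A0 sc br L)"
    using A0_faithful A0_comp unfolding faithful_absorbing_ideal_def by blast
  then show ?thesis ..
next
  case False
  with a have "a \<in> AQ sc br" "a \<noteq> (\<lambda>_. 0)" by auto
  then obtain I where "assoc_ideal sc (A0 sc br L) I" "left_faithful (A0 sc br L) I"
    "\<exists>i\<in>I. a \<circ> i \<noteq> (\<lambda>_. 0)" "\<forall>i\<in>I. a \<circ> i \<in> A0 sc br L"
    by (rule strong_right_ideally_absorbedE[OF absorbed])
  then show ?thesis by (blast intro: faithful_absorbing_idealI)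
qed

definition expansion_denominators :: "('k \<times> ('v \<Rightarrow> 'v) \<times> ('v \<Rightarrow> 'v)) list \<Rightarrow> ('v \<Rightarrow> 'v) set" where
  "expansion_denominators xs =
     A0 sc br L \<inter> (\<Inter>a\<in>expansion_factors xs. denominator_ideal (A0 sc br L) a)"

lemma expansion_denominators_subset: "expansion_denominators xs \<subseteq> A0 sc br L"
  unfolding expansion_denominators_def by blast

lemma left_faithful_expansion_denominators:
  assumes absorbed: "strong_right_ideally_absorbed sc (AQ sc br) (A0 sc br L)"
    and A0_faithful: "left_faithful (A0 sc br L) (A0 sc br L)"
    and "bracket_expansion q xs"
  shows "left_faithful (A0 sc br L) (expansion_denominators xs)"
  unfolding expansion_denominators_def
proof (rule left_faithful_INT_denominator_ideal[OF A0_comp A0_faithful])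
  show "finite (expansion_factors xs)" unfolding expansion_factors_def by blast
  show "\<exists>I. faithful_absorbing_ideal (A0 sc br L) a I" if "a \<in> expansion_factors xs" for a
    using that expansion_factors_subset[OF \<open>bracket_expansion q xs\<close>]
      insert_id_AQ_faithful_absorbing_ideal[OF absorbed A0_faithful] by blast
qed

lemma Lop_comp_in_A0:
  assumes q: "q \<in> AQ sc br" "bracket_expansion q xs"
    and u: "u \<in> expansion_denominators xs" and w: "w \<in> expansion_denominators xs"
    and "l\<^sub>0 \<in> L"
  shows "Lop br (u (w l\<^sub>0)) \<circ> q \<in> A0 sc br L"
proof -
  have "br (u (w l\<^sub>0)) (q l) \<in> L" if l: "l \<in> L" for l
  proof -
    \<comment> \<open>\<open>u\<close> brings \<open>\<beta>\<close> into \<open>\<A>\<^sub>0\<close>; then \<open>w\<close> does the same for \<open>\<alpha>\<close> composed with \<open>L\<^sub>l \<beta> u \<in> \<A>\<^sub>0\<close>.\<close>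
    have "sc c (\<alpha> (br l (\<beta> (u (w l\<^sub>0))))) \<in> L" if "(c, \<alpha>, \<beta>) \<in> set xs" for c \<alpha> \<beta>
    proof -
      have \<alpha>: "\<alpha> \<in> expansion_factors xs" and \<beta>: "\<beta> \<in> expansion_factors xs"
        using in_expansion_factors[OF that] by auto
      have "\<beta> \<circ> id \<circ> u \<in> A0 sc br L"
        using u \<beta> denominator_idealD unfolding expansion_denominators_def by blast
      then have "Lop br l \<circ> \<beta> \<circ> u \<in> A0 sc br L"
        using A0_comp[OF Lop_in_A0[OF l]] by (simp add: comp_assoc)
      then have "\<alpha> \<circ> (Lop br l \<circ> \<beta> \<circ> u) \<circ> w \<in> A0 sc br L"
        using w \<alpha> denominator_idealD unfolding expansion_denominators_def by blast
      from A0_apply[OF this \<open>l\<^sub>0 \<in> L\<close>] have "\<alpha> (br l (\<beta> (u (w l\<^sub>0)))) \<in> L"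
        by (simp add: Lop_def)
      then show ?thesis using subspace_scale[OF subspace_L] by blast
    qed
    then have "(\<Sum>(c, \<alpha>, \<beta>)\<leftarrow>xs. sc c (\<alpha> (br l (\<beta> (u (w l\<^sub>0)))))) \<in> L"
      by (intro sum_list_in_L) auto
    moreover have "br (q l) (u (w l\<^sub>0)) = (\<Sum>(c, \<alpha>, \<beta>)\<leftarrow>xs. sc c (\<alpha> (br l (\<beta> (u (w l\<^sub>0))))))"
      using q(2) unfolding bracket_expansion_def by blast
    then have "br (u (w l\<^sub>0)) (q l) = - (\<Sum>(c, \<alpha>, \<beta>)\<leftarrow>xs. sc c (\<alpha> (br l (\<beta> (u (w l\<^sub>0))))))"
      by (simp add: bracket_antisym[of "u (w l\<^sub>0)" "q l"])
    ultimately show ?thesis using subspace_neg[OF subspace_L] by simp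
  qed
  moreover have "Lop br (u (w l\<^sub>0)) \<circ> q \<in> AQ sc br"
    using AQ_comp[OF Lop_in_AQ q(1)] .
  ultimately show ?thesis unfolding A0_def by (simp add: Lop_def)
qed

lemma eq_zero_if_bracket_vanishes:
  assumes "y \<in> L" and W: "left_faithful (A0 sc br L) W" "W \<subseteq> A0 sc br L"
    and vanish: "\<And>u w l. u \<in> W \<Longrightarrow> w \<in> W \<Longrightarrow> l \<in> L \<Longrightarrow> br y (u (w l)) = 0"
  shows "y = 0"
proof -
  have Ly: "Lop br y \<in> A0 sc br L" using Lop_in_A0[OF \<open>y \<in> L\<close>] .
  have "Lop br y \<circ> u = (\<lambda>_. 0)" if u: "u \<in> W" for u
  proof -
    have "Lop br y \<circ> u \<circ> w = (\<lambda>_. 0)" if w: "w \<in> W" for w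
    proof (rule AQ_eq_zero_if_vanishes_on_L)
      have "u \<in> AQ sc br" "w \<in> AQ sc br" using u w W(2) A0_subset_AQ by auto
      then show "Lop br y \<circ> u \<circ> w \<in> AQ sc br" using AQ_comp Lop_in_AQ by blast
      show "(Lop br y \<circ> u \<circ> w) l = 0" if "l \<in> L" for l
        using vanish[OF u w that] by (simp add: Lop_def)
    qed
    moreover have "Lop br y \<circ> u \<in> A0 sc br L" using A0_comp[OF Ly] u W(2) by blast
    ultimately show ?thesis using W(1) unfolding left_faithful_def by blast
  qed
  with W(1) Ly have "Lop br y = (\<lambda>_. 0)" unfolding left_faithful_def by blast
  then have "br y x = 0" for x by (simp add: Lop_def fun_eq_iff)
  then have "y \<in> lanQ br" unfolding lanQ_def by blast
  then show ?thesis using lan_trivial by simp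
qed

lemma A0_left_faithful:
  assumes "strong_right_ideally_absorbed sc (AQ sc br) (A0 sc br L)"
    and "p \<in> AQ sc br" "p \<noteq> (\<lambda>_. 0)"
  shows "left_faithful (A0 sc br L) (A0 sc br L)"
proof -
  obtain I where "assoc_ideal sc (A0 sc br L) I" "left_faithful (A0 sc br L) I"
    by (rule strong_right_ideally_absorbedE[OF assms])
  then show ?thesis unfolding assoc_ideal_def by (blast intro: left_faithful_mono)
qed

lemma AQ_nonzero_value_in_L:
  assumes "strong_right_ideally_absorbed sc (AQ sc br) (A0 sc br L)"
    and "p \<in> AQ sc br" "p \<noteq> (\<lambda>_. 0)"
  obtains v where "p v \<in> L" "p v \<noteq> 0"
proof -
  obtain I where "\<exists>i\<in>I. p \<circ> i \<noteq> (\<lambda>_. 0)" and p_abs: "\<forall>i\<in>I. p \<circ> i \<in> A0 sc br L"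
    by (rule strong_right_ideally_absorbedE[OF assms])
  then obtain i where "p \<circ> i \<in> A0 sc br L" "p \<circ> i \<noteq> (\<lambda>_. 0)" by blast
  moreover from this have "\<exists>l\<in>L. p (i l) \<noteq> 0"
    using AQ_eq_zero_if_vanishes_on_L A0_subset_AQ by fastforce
  ultimately show ?thesis using that A0_apply[of "p \<circ> i"] by auto
qed

lemma exists_left_multiplier:
  assumes absorbed: "strong_right_ideally_absorbed sc (AQ sc br) (A0 sc br L)"
    and p: "p \<in> AQ sc br" "p \<noteq> (\<lambda>_. 0)" and q: "q \<in> AQ sc br"
  shows "\<exists>x\<in>A0 sc br L. x \<circ> p \<noteq> (\<lambda>_. 0) \<and> x \<circ> q \<in> A0 sc br L"
proof -
  obtain v where y: "p v \<in> L" "p v \<noteq> 0"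
    using AQ_nonzero_value_in_L[OF absorbed p] .
  obtain xs where xs: "bracket_expansion q xs" using AQ_bracket_expansion[OF q] by blast
  let ?W = "expansion_denominators xs"
  have "left_faithful (A0 sc br L) ?W"
    using left_faithful_expansion_denominators[OF absorbed A0_left_faithful[OF absorbed p] xs] .
  then obtain u w l where uwl: "u \<in> ?W" "w \<in> ?W" "l \<in> L" and "br (p v) (u (w l)) \<noteq> 0"
    using eq_zero_if_bracket_vanishes[OF y(1) _ expansion_denominators_subset] y(2) by blast
  then have nonzero: "br (u (w l)) (p v) \<noteq> 0"
    by (simp add: bracket_antisym[of "u (w l)"])
  show ?thesis
  proof (intro bexI conjI)
    show "Lop br (u (w l)) \<circ> p \<noteq> (\<lambda>_. 0)"
    proof
      assume "Lop br (u (w l)) \<circ> p = (\<lambda>_. 0)"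
      from fun_cong[OF this, of v] show False using nonzero by (simp add: Lop_def)
    qed
    show "Lop br (u (w l)) \<circ> q \<in> A0 sc br L"
      using Lop_comp_in_A0[OF q xs uwl] .
    show "Lop br (u (w l)) \<in> A0 sc br L"
      using uwl expansion_denominators_subset by (blast intro: Lop_in_A0 A0_apply)
  qed
qed

end

theorem corollary6p10:
  fixes sc :: "'k::field \<Rightarrow> 'v::ab_group_add \<Rightarrow> 'v" and br :: "'v \<Rightarrow> 'v \<Rightarrow> 'v" and L :: "'v set"
  assumes "symmetric_leibniz sc br"
    and "subalgebra sc br L"
    and "dense_in sc br L"
    and "semiprime sc br L"
    and "ranQ br = {0}" and "lanQ br = {0}"
    and "strong_right_ideally_absorbed sc (AQ sc br) (A0 sc br L)"
  shows "left_quotient_algebra (AQ sc br) (A0 sc br L)"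
proof -
  interpret dense_extension sc br L
    using assms(1,2,3,5,6) by unfold_locales
  show ?thesis
    unfolding left_quotient_algebra_def using exists_left_multiplier[OF assms(7)] by blast
qed

end
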